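(* Let ${\bf p}=({\bf p}_1,\dots,{\bf p}_n)$ and ${\bf q}=({\bf q}_1,\dots,{\bf q}_m)$ be configurations in $\mathbb R^d$. Suppose there are subconfigurations ${\bf p}'\subset{\bf p}$ and ${\bf q}'\subset{\bf q}$ such that the combined set of points of $({\bf p}',{\bf q}')$ is in quadric general position in $\mathbb R^d$ and there is no quadric strictly separating ${\bf p}'$ and ${\bf q}'$. Then $(K(n,m),{\bf p},{\bf q})$ is super stable, $n+m\ge (d+1)(d+2)/2+1$, and the affine span of ${\bf p}$ equals the affine span of ${\bf q}$, which is all of $\mathbb R^d$.
   Context: For ${\bf x}\in\mathbb R^d$, $\hat{\bf x}\in\mathbb R^{d+1}$ is ${\bf x}$ with a $1$ appended; $\mathcal M_d$ is the space of symmetric $(d+1)\times(d+1)$ matrices and $\mathcal V({\bf x})=\hat{\bf x}\hat{\bf x}^t\in\mathcal M_d$. A configuration in $\mathbb R^d$ is in quadric general position if every $k+1$ of the points $\mathcal V({\bf x})$ ($\bf x$ in the configuration) span a $k$-dimensional affine subspace of $\mathcal M_d$, for $k=1,\dots,(d+1)(d+2)/2-1$. Point sets are strictly separated by a quadric if there is a symmetric $(d+1)\times(d+1)$ matrix $A$ with $\hat{\bf b}^tA\hat{\bf b}<0<\hat{\bf a}^tA\hat{\bf a}$ for all ${\bf a}$ in the first set and ${\bf b}$ in the second. $(K(n,m),{\bf p},{\bf q})$ is the framework with bars joining ${\bf p}_i$ to ${\bf q}_j$ for all $i,j$ ($N=n+m$ vertices). An equilibrium stress assigns scalars $\omega_{ij}=\omega_{ji}$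 to bars with $\sum_i\omega_{ij}({\bf p}_i-{\bf p}_j)=0$ at every vertex $j$; its stress matrix has off-diagonal entries $-\omega_{ij}$ (zero on non-edges) and zero row sums. A framework with affine span $\mathbb R^d$ is super stable if it has an equilibrium stress with positive semidefinite stress matrix of rank $N-d-1$ and its bar vectors do not lie on a conic at infinity (i.e. there is no nonzero symmetric $d\times d$ matrix $Q$ with ${\bf v}^tQ{\bf v}=0$ for every bar vector ${\bf v}$). *)

theory Defs
  imports "HOL-Analysis.Analysis"
begin

text \<open>Points of R^d are vectors of type real^'d (d = CARD('d)).
  hat x in R^(d+1) is x with a 1 appended; the extra coordinate is the index None
  of the index type 'd option.\<close>

definition hat :: "real^'d \<Rightarrow> real^('d option)" where
  "hat x = (\<chi> i. case i of None \<Rightarrow> 1 | Some j \<Rightarrow> x $ j)"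

definition VV :: "real^'d \<Rightarrow> real^('d option)^('d option)" where
  "VV x = (\<chi> i j. hat x $ i * hat x $ j)"

definition dimM :: "nat \<Rightarrow> nat" where
  "dimM d = (d + 1) * (d + 2) div 2"

definition quadric_general_position :: "('i \<Rightarrow> real^'d) \<Rightarrow> 'i set \<Rightarrow> bool" where
  "quadric_general_position f S \<longleftrightarrow>
     (\<forall>T k. T \<subseteq> S \<and> finite T \<and> card T = k + 1 \<and> 1 \<le> k \<and> k \<le> dimM CARD('d) - 1
        \<longrightarrow> aff_dim (VV ` f ` T) = int k)"

definition strictly_separated_by_quadric :: "(real^'d) set \<Rightarrow> (real^'d) set \<Rightarrow> bool" where
  "strictly_separated_by_quadric A B \<longleftrightarrow>
     (\<exists>M :: real^('d option)^('d option). transpose M = M \<and>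
        (\<forall>a\<in>A. 0 < hat a \<bullet> (M *v hat a)) \<and> (\<forall>b\<in>B. hat b \<bullet> (M *v hat b) < 0))"

definition equilibrium_stress ::
  "('v::finite \<Rightarrow> 'v \<Rightarrow> bool) \<Rightarrow> ('v \<Rightarrow> real^'d) \<Rightarrow> ('v \<Rightarrow> 'v \<Rightarrow> real) \<Rightarrow> bool" where
  "equilibrium_stress E r w \<longleftrightarrow>
     (\<forall>i j. w i j = w j i) \<and> (\<forall>i j. \<not> E i j \<longrightarrow> w i j = 0) \<and>
     (\<forall>j. (\<Sum>i\<in>UNIV. w i j *\<^sub>R (r i - r j)) = 0)"

definition stress_matrix :: "('v::finite \<Rightarrow> 'v \<Rightarrow> real) \<Rightarrow> real^'v^'v" where
  "stress_matrix w = (\<chi> i j. if i = j then (\<Sum>k\<in>UNIV - {i}. w i k) else - w i j)"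

definition psd :: "real^'n^'n \<Rightarrow> bool" where
  "psd M \<longleftrightarrow> (\<forall>x. 0 \<le> x \<bullet> (M *v x))"

definition bar_vectors :: "('v \<Rightarrow> 'v \<Rightarrow> bool) \<Rightarrow> ('v \<Rightarrow> real^'d) \<Rightarrow> (real^'d) set" where
  "bar_vectors E r = {r i - r j | i j. E i j}"

definition on_conic_at_infinity :: "(real^'d) set \<Rightarrow> bool" where
  "on_conic_at_infinity X \<longleftrightarrow>
     (\<exists>Q :: real^'d^'d. Q \<noteq> 0 \<and> transpose Q = Q \<and> (\<forall>v\<in>X. v \<bullet> (Q *v v) = 0))"

definition super_stable :: "('v::finite \<Rightarrow> 'v \<Rightarrow> bool) \<Rightarrow> ('v \<Rightarrow> real^'d) \<Rightarrow> bool" where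
  "super_stable E r \<longleftrightarrow>
     affine hull (range r) = UNIV \<and>
     (\<exists>w. equilibrium_stress E r w \<and> psd (stress_matrix w) \<and>
          rank (stress_matrix w) = CARD('v) - CARD('d) - 1) \<and>
     \<not> on_conic_at_infinity (bar_vectors E r)"

text \<open>Complete bipartite graph K(n,m) on vertex type 'a + 'b
  (vertices Inl i are the p_i, vertices Inr j are the q_j).\<close>
fun Kbip :: "('a + 'b) \<Rightarrow> ('a + 'b) \<Rightarrow> bool" where
  "Kbip (Inl _) (Inr _) = True"
| "Kbip (Inr _) (Inl _) = True"
| "Kbip _ _ = False"

definition bip_config :: "('a \<Rightarrow> real^'d) \<Rightarrow> ('b \<Rightarrow> real^'d) \<Rightarrow> ('a + 'b) \<Rightarrow> real^'d" where
  "bip_config p q = case_sum p q"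

end

theory Submission
  imports Defs
begin

text \<open>
  A quadric is a symmetric matrix M, and its value hat x \<bullet> (M *v hat x) at x is the linear
  functional M \<bullet> VV x of the Veronese lift VV x. So if no quadric separates p' from q', the convex
  hulls of VV p' and VV q' meet, giving a dependence \<Sum> \<gamma>_u VV r_u = 0, \<Sum> \<gamma>_u = 0, with
  \<gamma> \<ge> 0 on p' and \<gamma> \<le> 0 on q'. Quadric general position forces its support to have more
  than dimM d points, and the lifts of any dimM d of them span all symmetric matrices. Hence
  the vectors hat r_u span R^(d+1), and a small perturbation by a dependence with prescribed
  signs outside those dimM d points turns \<gamma> into \<Sum> \<alpha>_i VV p_i = \<Sum> \<beta>_j VV q_j with all
  \<alpha>_i, \<beta>_j > 0.

  Then G = \<Sum> \<alpha>_i VV p_i is positive definite, and with \<kappa>_ij = hat p_i \<bullet> G^-1 hat q_j the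
  identity G G^-1 = 1, expanded once through the p-side and once through the q-side of G,
  writes hat p_i as \<Sum>_j \<beta>_j \<kappa>_ij hat q_j and hat q_j as \<Sum>_i \<alpha>_i \<kappa>_ij hat p_i. These are
  exactly the equilibrium conditions for the stress \<omega>_ij = \<alpha>_i \<beta>_j \<kappa>_ij. Its stress form is
  the weighted sum of squares \<Sum>_u \<gamma>_u (x_u - hat r_u \<bullet> z(x))^2, whose zeros are exactly the
  values of affine functions on the configuration; this gives positive semidefiniteness and
  rank N - d - 1. The same spanning property rules out a conic at infinity.
\<close>

section \<open>Lifted points and the Veronese map\<close>

lemma hat_None [simp]: "hat x $ None = 1"
  by (simp add: hat_def)

lemma hat_Some [simp]: "hat x $ Some j = x $ j"
  by (simp add: hat_def)

lemma VV_component [simp]: "VV x $ i $ j = hat x $ i * hat x $ j"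
  by (simp add: VV_def)

lemma hat_neq_0: "hat x \<noteq> 0"
  by (metis hat_None zero_index zero_neq_one)

lemma sum_UNIV_option: "(\<Sum>i\<in>UNIV. g i) = g None + (\<Sum>j\<in>UNIV. g (Some j))"
  for g :: "'d::finite option \<Rightarrow> 'c::comm_monoid_add"
  by (simp add: UNIV_option_conv sum.reindex)

lemma sum_UNIV_sum:
  "(\<Sum>u\<in>UNIV. g u) = (\<Sum>i\<in>UNIV. g (Inl i)) + (\<Sum>j\<in>UNIV. g (Inr j))"
  for g :: "'a::finite + 'b::finite \<Rightarrow> 'c::comm_monoid_add"
proof -
  have UNIV_eq: "(UNIV :: ('a + 'b) set) = UNIV <+> UNIV" by simp
  show ?thesis unfolding UNIV_eq by (simp only: sum.Plus[OF finite finite] comp_def)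
qed

lemma bip_config_Inl [simp]: "bip_config p q (Inl i) = p i"
  and bip_config_Inr [simp]: "bip_config p q (Inr j) = q j"
  by (simp_all add: bip_config_def)

definition affine_form :: "real \<Rightarrow> real^'d \<Rightarrow> real^'d option" where
  "affine_form c a = (\<chi> l. case l of None \<Rightarrow> c | Some m \<Rightarrow> a $ m)"

lemma inner_affine_form_hat: "affine_form c a \<bullet> hat x = c + a \<bullet> x"
  by (simp add: affine_form_def inner_vec_def sum_UNIV_option)

lemma affine_form_eq_0D: "affine_form c a = 0 \<Longrightarrow> a = 0"
  by (simp add: affine_form_def vec_eq_iff) (metis option.simps(5))

lemma affine_form_components: "affine_form (z $ None) (\<chi> j. z $ Some j) = z"
  by (simp add: affine_form_def vec_eq_iff split: option.split)

lemma orthogonal_hats_imp_0: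
  assumes "\<And>x. z \<bullet> hat x = 0"
  shows "z = 0"
proof -
  define c a where "c = z $ None" and "a = (\<chi> j. z $ Some j)"
  have z: "z = affine_form c a" by (simp add: c_def a_def affine_form_components)
  have "c = 0" using assms[of 0] by (simp add: z inner_affine_form_hat)
  moreover have "a = 0" using assms[of a] \<open>c = 0\<close> by (simp add: z inner_affine_form_hat)
  ultimately show ?thesis by (simp add: z affine_form_def vec_eq_iff split: option.split)
qed

lemma affine_hull_eq_UNIV_if_hats_span:
  fixes x :: "'i \<Rightarrow> real^'d"
  assumes "\<And>z. (\<And>i. z \<bullet> hat (x i) = 0) \<Longrightarrow> z = 0"
  shows "affine hull (range x) = UNIV"
proof (rule ccontr)
  assume "affine hull (range x) \<noteq> UNIV"
  then have "aff_dim (range x) < int DIM(real^'d)" by (metis aff_dim_lt_full)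
  then obtain a b where "a \<noteq> 0" and "range x \<subseteq> {y. a \<bullet> y = b}"
    by (rule aff_lowdim_subset_hyperplane)
  then have "affine_form (-b) a = 0" by (intro assms) (auto simp: inner_affine_form_hat)
  with \<open>a \<noteq> 0\<close> show False by (auto dest: affine_form_eq_0D)
qed

lemma hat_combination:
  assumes "(\<Sum>j\<in>S. c j *\<^sub>R hat (x j)) = hat y"
  shows "sum c S = 1" and "(\<Sum>j\<in>S. c j *\<^sub>R x j) = y"
proof -
  show "sum c S = 1" using arg_cong[OF assms, of "\<lambda>v. v $ None"] by simp
  show "(\<Sum>j\<in>S. c j *\<^sub>R x j) = y"
    using arg_cong[OF assms, of "\<lambda>v. v $ Some _"] by (simp add: vec_eq_iff)
qed

lemma VV_mult_vector: "VV x *v z = (hat x \<bullet> z) *\<^sub>R hat x"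
  by (simp add: vec_eq_iff matrix_vector_mult_def inner_vec_def sum_distrib_left mult_ac)

lemma inner_VV: "M \<bullet> VV x = hat x \<bullet> (M *v hat x)"
  by (simp add: inner_vec_def matrix_vector_mult_def sum_distrib_left mult_ac)

lemma transpose_VV: "transpose (VV x) = VV x"
  by (simp add: vec_eq_iff transpose_def mult.commute)

lemma inner_transpose: "transpose A \<bullet> B = A \<bullet> transpose B"
  for A :: "real^'n^'m" and B :: "real^'m^'n"
  by (simp add: inner_vec_def transpose_def) (rule sum.swap)

lemma VV_0_inner_VV: "VV 0 \<bullet> VV x = 1"
  by (simp add: inner_VV VV_mult_vector inner_vec_def sum_UNIV_option)

lemma sum_scaleR_VV_mult:
  "(\<Sum>i\<in>S. c i *\<^sub>R VV (x i)) *v z = (\<Sum>i\<in>S. (c i * (hat (x i) \<bullet> z)) *\<^sub>R hat (x i))"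
  by (induction S rule: infinite_finite_induct)
     (simp_all add: matrix_vector_mult_add_rdistrib scaleR_matrix_vector_assoc[symmetric] VV_mult_vector)

lemma quadratic_sum_scaleR_VV:
  "z \<bullet> ((\<Sum>i\<in>S. c i *\<^sub>R VV (x i)) *v z) = (\<Sum>i\<in>S. c i * (hat (x i) \<bullet> z)\<^sup>2)"
  by (simp add: sum_scaleR_VV_mult inner_sum_right power2_eq_square inner_commute mult_ac)

lemma quadratic_sum_scaleR_VV_eq_0D:
  assumes "finite S" "\<And>i. i \<in> S \<Longrightarrow> 0 < c i"
    and "z \<bullet> ((\<Sum>i\<in>S. c i *\<^sub>R VV (x i)) *v z) = 0" and "i \<in> S"
  shows "hat (x i) \<bullet> z = 0"
proof -
  have "\<forall>i\<in>S. c i * (hat (x i) \<bullet> z)\<^sup>2 = 0"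
    using assms by (subst sum_nonneg_eq_0_iff[symmetric]) (auto simp: quadratic_sum_scaleR_VV less_imp_le)
  then show ?thesis using assms(2,4) by fastforce
qed

section \<open>Symmetric matrices\<close>

lemma inner_matrix_vector_mult_symmetric:
  fixes A :: "real^'n^'n"
  assumes "transpose A = A"
  shows "x \<bullet> (A *v y) = (A *v x) \<bullet> y"
  by (metis assms dot_lmul_matrix transpose_matrix_vector)

lemma rank_add_dim_kernel_symmetric:
  fixes A :: "real^'n^'n"
  assumes "transpose A = A"
  shows "rank A + dim {x. A *v x = 0} = CARD('n)"
proof -
  let ?R = "range ((*v) A)"
  have "subspace ?R"
    by (rule linear_subspace_image[OF matrix_vector_mul_linear subspace_UNIV])
  then have "dim {y \<in> UNIV. \<forall>x \<in> ?R. orthogonal x y} + dim ?R = dim (UNIV :: (real^'n) set)"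
    by (rule dim_subspace_orthogonal_to_vectors[OF _ subspace_UNIV]) simp
  moreover have "{y \<in> UNIV. \<forall>x \<in> ?R. orthogonal x y} = {y. A *v y = 0}"
  proof (intro set_eqI iffI)
    fix y assume "y \<in> {y \<in> UNIV. \<forall>x \<in> ?R. orthogonal x y}"
    then have "orthogonal (A *v (A *v y)) y" by auto
    then have "(A *v y) \<bullet> (A *v y) = 0"
      by (simp add: orthogonal_def inner_matrix_vector_mult_symmetric[OF assms])
    then show "y \<in> {y. A *v y = 0}" by simp
  qed (auto simp: orthogonal_def inner_matrix_vector_mult_symmetric[OF assms, symmetric])
  ultimately show ?thesis by (simp add: rank_dim_range dim_UNIV add.commute)
qed

definition symmetric_matrices :: "(real^'n^'n) set" where
  "symmetric_matrices = {X. transpose X = X}"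

lemma symmetric_matrices_subset_span:
  "symmetric_matrices \<subseteq>
     span ((\<lambda>s. \<chi> a b. if {a, b} = s then 1 else 0) ` {s::'n::finite set. card s = 1 \<or> card s = 2})"
  (is "_ \<subseteq> span (?E ` ?P)")
proof
  fix X :: "real^'n^'n" assume "X \<in> symmetric_matrices"
  then have X_transpose: "transpose X = X" by (simp add: symmetric_matrices_def)
  have X_sym: "X $ a $ b = X $ b $ a" for a b
  proof -
    have "X $ a $ b = transpose X $ b $ a" by (simp add: transpose_def)
    then show ?thesis by (simp only: X_transpose)
  qed
  define c where "c s = X $ fst (SOME ab. {fst ab, snd ab} = s) $ snd (SOME ab. {fst ab, snd ab} = s)"
    for s :: "'n set"
  have c: "c {a, b} = X $ a $ b" for a b
  proof -
    have "\<exists>ab. {fst ab, snd ab} = {a, b}" by (rule exI[of _ "(a, b)"]) simp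
    then have "{fst (SOME ab. {fst ab, snd ab} = {a, b}), snd (SOME ab. {fst ab, snd ab} = {a, b})} = {a, b}"
      by (rule someI_ex)
    then show ?thesis unfolding c_def doubleton_eq_iff using X_sym by auto
  qed
  have P: "{a, b} \<in> ?P" for a b
    by (cases "a = b") auto
  have "X = (\<Sum>s\<in>?P. c s *\<^sub>R ?E s)"
  proof (intro vec_eq_iff[THEN iffD2] allI)
    fix a b
    have "(\<Sum>s\<in>?P. c s *\<^sub>R ?E s) $ a $ b = (\<Sum>s\<in>?P. if {a, b} = s then c s else 0)"
      by (simp add: if_distrib[of "\<lambda>t. c _ * t"] cong: if_cong)
    also have "\<dots> = X $ a $ b" using P[of a b] by (simp add: c)
    finally show "X $ a $ b = (\<Sum>s\<in>?P. c s *\<^sub>R ?E s) $ a $ b" ..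
  qed
  also have "\<dots> \<in> span (?E ` ?P)"
    by (intro span_sum span_scale span_base imageI)
  finally show "X \<in> span (?E ` ?P)" .
qed

lemma dim_symmetric_matrices_le:
  "dim (symmetric_matrices :: (real^'n::finite^'n) set) \<le> CARD('n) + (CARD('n) choose 2)"
proof -
  let ?P = "{s::'n set. card s = 1 \<or> card s = 2}"
  have "dim (symmetric_matrices :: (real^'n^'n) set) \<le> card ?P"
    using dim_le_card[OF symmetric_matrices_subset_span] card_image_le[OF finite]
    by (rule order_trans) simp
  also have "?P = {s. card s = 1} \<union> {s. card s = 2}" by auto
  also have "card \<dots> = card {s::'n set. card s = 1} + card {s::'n set. card s = 2}"
    by (rule card_Un_disjoint) auto
  also have "\<dots> = CARD('n) + (CARD('n) choose 2)"
    using n_subsets[of "UNIV :: 'n set"] by simp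
  finally show ?thesis .
qed

lemma dimM_eq: "dimM d = Suc d + (Suc d choose 2)"
proof -
  have "(d + 1) * (d + 2) = Suc d * d + 2 * Suc d" by (simp add: algebra_simps)
  then show ?thesis by (simp add: dimM_def choose_two)
qed

lemma dim_symmetric_matrices_le_dimM:
  "dim (symmetric_matrices :: (real^'d::finite option^'d option) set) \<le> dimM CARD('d)"
  using dim_symmetric_matrices_le[where 'n = "'d option"] by (simp add: dimM_eq)

lemma dimM_ge_3: "3 \<le> dimM CARD('d::finite)"
proof -
  have "1 \<le> CARD('d)" by (simp add: Suc_leI)
  then have "6 \<le> (CARD('d) + 1) * (CARD('d) + 2)"
    using mult_le_mono[of 2 "CARD('d) + 1" 3 "CARD('d) + 2"] by simp
  then have "6 div 2 \<le> (CARD('d) + 1) * (CARD('d) + 2) div 2" by (rule div_le_mono)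
  then show ?thesis by (simp add: dimM_def)
qed

section \<open>Quadric general position\<close>

lemma quadric_general_position_aff_dim:
  fixes f :: "'i \<Rightarrow> real^'d"
  assumes "quadric_general_position f S" "T \<subseteq> S" "finite T" "card T = k + 1"
    and "1 \<le> k" "k \<le> dimM CARD('d) - 1"
  shows "aff_dim (VV ` f ` T) = int k"
  using assms unfolding quadric_general_position_def by blast

lemma quadric_general_position_inj_on:
  fixes f :: "'i \<Rightarrow> real^'d"
  assumes qgp: "quadric_general_position f S"
  shows "inj_on (VV \<circ> f) S"
proof (rule inj_onI, rule ccontr)
  fix s t assume "s \<in> S" "t \<in> S" "(VV \<circ> f) s = (VV \<circ> f) t" "s \<noteq> t"
  then have "VV ` f ` {s, t} = {VV (f s)}" by auto
  moreover have "aff_dim (VV ` f ` {s, t}) = int 1"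
    using \<open>s \<in> S\<close> \<open>t \<in> S\<close> \<open>s \<noteq> t\<close> dimM_ge_3[where 'd = 'd]
    by (intro quadric_general_position_aff_dim[OF qgp]) auto
  ultimately show False by simp
qed

lemma quadric_general_position_affine_independent:
  fixes f :: "'i \<Rightarrow> real^'d"
  assumes qgp: "quadric_general_position f S"
    and T: "T \<subseteq> S" "finite T" "card T \<le> dimM CARD('d)"
  shows "\<not> affine_dependent (VV ` f ` T)"
proof (cases "card T \<le> 1")
  case True
  then have "T = {} \<or> (\<exists>t. T = {t})"
    using T(2) by (metis card_1_singletonE card_0_eq le_Suc_eq le_zero_eq One_nat_def)
  then show ?thesis by auto
next
  case False
  have "aff_dim (VV ` f ` T) = int (card T - 1)"
    using False T by (intro quadric_general_position_aff_dim[OF qgp]) auto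
  moreover have "card (VV ` f ` T) = card T"
    using card_image[OF inj_on_subset[OF quadric_general_position_inj_on[OF qgp] T(1)]]
    by (simp add: image_comp)
  ultimately show ?thesis
    using False T(2) by (simp add: affine_independent_iff_card of_nat_diff)
qed

lemma affine_dependent_inj_image:
  assumes "inj_on h S" "finite S"
    and "sum g S = 0" "\<exists>u\<in>S. g u \<noteq> 0" "(\<Sum>u\<in>S. g u *\<^sub>R h u) = 0"
  shows "affine_dependent (h ` S)"
proof -
  define g' where "g' Y = g (inv_into S h Y)" for Y
  have "sum g' (h ` S) = 0" "\<exists>v\<in>h ` S. g' v \<noteq> 0" "(\<Sum>v\<in>h ` S. g' v *\<^sub>R v) = 0"
    using assms by (auto simp: sum.reindex g'_def inv_into_f_f)
  then show ?thesis using assms(2) by (auto simp: affine_dependent_explicit_finite)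
qed

lemma quadric_general_position_dependence_card:
  fixes f :: "'i \<Rightarrow> real^'d"
  assumes qgp: "quadric_general_position f S" and U: "U \<subseteq> S" "finite U"
    and "sum g U = 0" "\<exists>u\<in>U. g u \<noteq> 0" "(\<Sum>u\<in>U. g u *\<^sub>R VV (f u)) = 0"
  shows "dimM CARD('d) < card U"
proof (rule ccontr)
  assume "\<not> dimM CARD('d) < card U"
  then have "\<not> affine_dependent (VV ` f ` U)"
    by (intro quadric_general_position_affine_independent[OF qgp U]) simp
  moreover have "affine_dependent ((VV \<circ> f) ` U)"
    using assms inj_on_subset[OF quadric_general_position_inj_on[OF qgp] U(1)]
    by (intro affine_dependent_inj_image) auto
  ultimately show False by (simp add: image_comp)
qed

lemma independent_if_affine_independent_VV:
  assumes "\<not> affine_dependent (VV ` X)"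
  shows "independent (VV ` X)"
proof
  assume "dependent (VV ` X)"
  moreover have "finite (VV ` X)" using assms by (rule aff_independent_finite)
  ultimately obtain c where c: "\<exists>v\<in>VV ` X. c v \<noteq> 0" "(\<Sum>v\<in>VV ` X. c v *\<^sub>R v) = 0"
    by (auto simp: dependent_finite)
  have "sum c (VV ` X) = (\<Sum>v\<in>VV ` X. c v *\<^sub>R v) $ None $ None"
    by (auto intro: sum.cong)
  then have "sum c (VV ` X) = 0" using c(2) by simp
  then have "affine_dependent (VV ` X)"
    using c \<open>finite (VV ` X)\<close> by (auto simp: affine_dependent_explicit_finite)
  with assms show False by contradiction
qed

lemma quadric_general_position_span:
  fixes f :: "'i \<Rightarrow> real^'d"
  assumes qgp: "quadric_general_position f S"
    and T: "T \<subseteq> S" "finite T" "card T = dimM CARD('d)"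
  shows "symmetric_matrices \<subseteq> span (VV ` f ` T)"
proof (rule card_ge_dim_independent)
  show "VV ` f ` T \<subseteq> symmetric_matrices"
    by (auto simp: symmetric_matrices_def transpose_VV)
  have "\<not> affine_dependent (VV ` f ` T)"
    using T by (intro quadric_general_position_affine_independent[OF qgp]) auto
  then show "independent (VV ` f ` T)"
    unfolding image_comp[symmetric] by (rule independent_if_affine_independent_VV)
  have "card (VV ` f ` T) = card T"
    using card_image[OF inj_on_subset[OF quadric_general_position_inj_on[OF qgp] T(1)]]
    by (simp add: image_comp)
  then show "dim (symmetric_matrices :: (real^'d option^'d option) set) \<le> card (VV ` f ` T)"
    using dim_symmetric_matrices_le_dimM[where 'd = 'd] T(3) by simp
qed

lemma quadric_general_position_hats_span:
  fixes f :: "'i \<Rightarrow> real^'d"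
  assumes qgp: "quadric_general_position f S"
    and T: "T \<subseteq> S" "finite T" "card T = dimM CARD('d)"
    and z: "\<And>t. t \<in> T \<Longrightarrow> z \<bullet> hat (f t) = 0"
  shows "z = 0"
proof (rule orthogonal_hats_imp_0)
  fix x
  let ?K = "{X :: real^'d option^'d option. X *v z = 0}"
  have "subspace ?K"
    by (auto simp: subspace_def matrix_vector_mult_add_rdistrib scaleR_matrix_vector_assoc[symmetric])
  moreover have "VV ` f ` T \<subseteq> ?K" using z by (auto simp: VV_mult_vector inner_commute)
  ultimately have "span (VV ` f ` T) \<subseteq> ?K" by (rule span_minimal[rotated])
  moreover have "VV x \<in> span (VV ` f ` T)"
    using quadric_general_position_span[OF qgp T]
    by (auto simp: symmetric_matrices_def transpose_VV)
  ultimately have "(hat x \<bullet> z) *\<^sub>R hat x = 0" by (auto simp: VV_mult_vector)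
  then show "z \<bullet> hat x = 0" by (simp add: hat_neq_0 inner_commute)
qed

lemma quadric_general_position_dependence_prescribed_outside:
  fixes f :: "'i::finite \<Rightarrow> real^'d"
  assumes qgp: "quadric_general_position f S"
    and T: "T \<subseteq> S" "card T = dimM CARD('d)"
  obtains \<delta> where "\<And>u. u \<notin> T \<Longrightarrow> \<delta> u = \<sigma> u" "(\<Sum>u\<in>UNIV. \<delta> u *\<^sub>R VV (f u)) = 0"
proof -
  let ?W = "\<Sum>u\<in>UNIV. \<sigma> u *\<^sub>R VV (f u)"
  have VV_span: "VV x \<in> span (VV ` f ` T)" for x
    using quadric_general_position_span[OF qgp T(1) finite T(2)]
    by (auto simp: symmetric_matrices_def transpose_VV)
  have "?W \<in> span (VV ` f ` T)"
    by (intro span_sum span_scale VV_span)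
  then obtain c where "(\<Sum>Y\<in>VV ` f ` T. c Y *\<^sub>R Y) = ?W"
    by (auto simp: span_finite)
  moreover have "inj_on (\<lambda>t. VV (f t)) T"
    using inj_on_subset[OF quadric_general_position_inj_on[OF qgp] T(1)] by (simp add: comp_def)
  ultimately have c: "(\<Sum>t\<in>T. c (VV (f t)) *\<^sub>R VV (f t)) = ?W"
    by (simp add: image_comp sum.reindex)
  define \<delta> where "\<delta> u = \<sigma> u - (if u \<in> T then c (VV (f u)) else 0)" for u
  have "(\<Sum>u\<in>UNIV. (if u \<in> T then c (VV (f u)) else 0) *\<^sub>R VV (f u)) = ?W"
    by (simp add: if_distrib[of "\<lambda>t. t *\<^sub>R _"] sum.If_cases c cong: if_cong)
  then have "(\<Sum>u\<in>UNIV. \<delta> u *\<^sub>R VV (f u)) = 0"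
    by (simp add: \<delta>_def scaleR_left_diff_distrib sum_subtractf)
  then show ?thesis using that[of \<delta>] by (simp add: \<delta>_def)
qed

section \<open>Separation by quadrics\<close>

lemma convex_hulls_VV_meet:
  fixes A B :: "(real^'d) set"
  assumes "finite A" "finite B" and not_sep: "\<not> strictly_separated_by_quadric A B"
  shows "convex hull (VV ` A) \<inter> convex hull (VV ` B) \<noteq> {}"
proof
  assume disj: "convex hull (VV ` A) \<inter> convex hull (VV ` B) = {}"
  have "A \<noteq> {}"
  proof
    assume "A = {}"
    have "transpose (- VV 0) = - VV (0 :: real^'d)" and "\<And>b. hat b \<bullet> (- VV 0 *v hat b) < 0"
      by (simp_all add: vec_eq_iff transpose_def inner_VV[symmetric] VV_0_inner_VV)
    then have "strictly_separated_by_quadric A B"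
      unfolding strictly_separated_by_quadric_def using \<open>A = {}\<close> by blast
    with not_sep show False by contradiction
  qed
  obtain a b where aB: "\<forall>X\<in>convex hull (VV ` B). a \<bullet> X < b"
    and aA: "\<forall>X\<in>convex hull (VV ` A). b < a \<bullet> X"
    using separating_hyperplane_closed_compact[of "convex hull (VV ` B)" "convex hull (VV ` A)"]
      disj assms(1,2) \<open>A \<noteq> {}\<close>
    by (auto simp: compact_imp_closed finite_imp_compact_convex_hull)
  \<comment> \<open>VV 0 is the matrix unit at the corner (None, None).\<close>
  define M where "M = (1/2::real) *\<^sub>R (a + transpose a) - b *\<^sub>R VV 0"
  have "transpose M = M"
    by (simp add: M_def vec_eq_iff transpose_def)
  moreover have "hat x \<bullet> (M *v hat x) = a \<bullet> VV x - b" for x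
    by (simp add: inner_VV[symmetric] M_def inner_diff_left inner_add_left inner_transpose
        transpose_VV VV_0_inner_VV)
  ultimately have "strictly_separated_by_quadric A B"
    unfolding strictly_separated_by_quadric_def using aA aB by (auto intro!: exI[of _ M] hull_inc)
  with not_sep show False by contradiction
qed

lemma convex_hull_inj_image_weights:
  fixes h :: "'i::finite \<Rightarrow> 'v::real_vector"
  assumes inj: "inj_on h S" and "X \<in> convex hull (h ` S)"
  obtains c where "\<And>i. 0 \<le> c i" "\<And>i. i \<notin> S \<Longrightarrow> c i = 0"
    "sum c UNIV = 1" "(\<Sum>i\<in>UNIV. c i *\<^sub>R h i) = X"
proof -
  obtain u where "\<forall>Y\<in>h ` S. 0 \<le> u Y" "sum u (h ` S) = 1" "(\<Sum>Y\<in>h ` S. u Y *\<^sub>R Y) = X"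
    using assms(2) by (auto simp: convex_hull_finite)
  moreover define c where "c i = (if i \<in> S then u (h i) else 0)" for i
  moreover have "sum c UNIV = sum u (h ` S)" "(\<Sum>i\<in>UNIV. c i *\<^sub>R h i) = (\<Sum>Y\<in>h ` S. u Y *\<^sub>R Y)"
    by (simp_all add: c_def sum.reindex[OF inj] if_distrib[of "\<lambda>t. t *\<^sub>R _"] sum.If_cases cong: if_cong)
  ultimately show ?thesis using that[of c] by auto
qed

lemma signed_VV_dependence:
  fixes p :: "'a::finite \<Rightarrow> real^'d" and q :: "'b::finite \<Rightarrow> real^'d"
  assumes qgp: "quadric_general_position (bip_config p q) (I <+> J)"
    and not_sep: "\<not> strictly_separated_by_quadric (p ` I) (q ` J)"
  obtains \<gamma> :: "'a + 'b \<Rightarrow> real" where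
    "\<And>u. \<gamma> u \<noteq> 0 \<Longrightarrow> u \<in> I <+> J" "\<And>i. 0 \<le> \<gamma> (Inl i)" "\<And>j. \<gamma> (Inr j) \<le> 0"
    "sum \<gamma> UNIV = 0" "(\<Sum>u\<in>UNIV. \<gamma> u *\<^sub>R VV (bip_config p q u)) = 0" "\<exists>u. \<gamma> u \<noteq> 0"
proof -
  have inj: "inj_on (VV \<circ> bip_config p q) (I <+> J)"
    by (rule quadric_general_position_inj_on[OF qgp])
  have "inj_on ((VV \<circ> bip_config p q) \<circ> Inl) I" "inj_on ((VV \<circ> bip_config p q) \<circ> Inr) J"
    by (auto intro!: comp_inj_on inj_on_subset[OF inj])
  then have inj_p: "inj_on (VV \<circ> p) I" and inj_q: "inj_on (VV \<circ> q) J"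
    by (simp_all add: comp_def)
  obtain X where "X \<in> convex hull ((VV \<circ> p) ` I)" "X \<in> convex hull ((VV \<circ> q) ` J)"
    using convex_hulls_VV_meet[OF _ _ not_sep] by (auto simp: image_comp)
  obtain \<alpha> where \<alpha>: "\<And>i. 0 \<le> \<alpha> i" "\<And>i. i \<notin> I \<Longrightarrow> \<alpha> i = 0" "sum \<alpha> UNIV = 1"
    "(\<Sum>i\<in>UNIV. \<alpha> i *\<^sub>R (VV \<circ> p) i) = X"
    using convex_hull_inj_image_weights[OF inj_p \<open>X \<in> convex hull ((VV \<circ> p) ` I)\<close>] by blast
  obtain \<beta> where \<beta>: "\<And>j. 0 \<le> \<beta> j" "\<And>j. j \<notin> J \<Longrightarrow> \<beta> j = 0" "sum \<beta> UNIV = 1"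
    "(\<Sum>j\<in>UNIV. \<beta> j *\<^sub>R (VV \<circ> q) j) = X"
    using convex_hull_inj_image_weights[OF inj_q \<open>X \<in> convex hull ((VV \<circ> q) ` J)\<close>] by blast
  show ?thesis
  proof (rule that[of "case_sum \<alpha> (\<lambda>j. - \<beta> j)"])
    obtain i where "\<alpha> i \<noteq> 0" using \<alpha>(3) by (metis sum.neutral zero_neq_one)
    then show "\<exists>u. case_sum \<alpha> (\<lambda>j. - \<beta> j) u \<noteq> 0" by (intro exI[of _ "Inl i"]) simp
    show "(\<Sum>u\<in>UNIV. case_sum \<alpha> (\<lambda>j. - \<beta> j) u *\<^sub>R VV (bip_config p q u)) = 0"
      using \<alpha>(4) \<beta>(4) by (simp add: sum_UNIV_sum sum_negf)
  qed (use \<alpha> \<beta> in \<open>auto simp: sum_UNIV_sum sum_negf split: sum.splits\<close>)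
qed

lemma exists_sign_preserving_perturbation:
  fixes \<gamma> \<delta> \<sigma> :: "'i \<Rightarrow> real"
  assumes "finite T" and nz: "\<And>u. u \<in> T \<Longrightarrow> \<gamma> u \<noteq> 0"
    and \<sigma>: "\<And>u. \<sigma> u = 1 \<or> \<sigma> u = -1" "\<And>u. 0 \<le> \<sigma> u * \<gamma> u"
    and \<delta>: "\<And>u. u \<notin> T \<Longrightarrow> \<delta> u = \<sigma> u"
  obtains \<epsilon> where "\<And>u. 0 < \<sigma> u * (\<gamma> u + \<epsilon> * \<delta> u)"
proof -
  define \<epsilon> where "\<epsilon> = Min (insert 1 ((\<lambda>u. \<bar>\<gamma> u\<bar> / (1 + \<bar>\<delta> u\<bar>)) ` T))"
  have "0 < \<epsilon>"
    unfolding \<epsilon>_def using assms(1) nz by (auto simp: Min_gr_iff add_pos_nonneg)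
  have small: "\<bar>\<epsilon> * \<delta> u\<bar> < \<bar>\<gamma> u\<bar>" if "u \<in> T" for u
  proof -
    have "\<epsilon> \<le> \<bar>\<gamma> u\<bar> / (1 + \<bar>\<delta> u\<bar>)" unfolding \<epsilon>_def using assms(1) that by (intro Min_le) auto
    then have "\<epsilon> * (1 + \<bar>\<delta> u\<bar>) \<le> \<bar>\<gamma> u\<bar>" by (simp add: pos_le_divide_eq add_pos_nonneg)
    then show ?thesis using \<open>0 < \<epsilon>\<close> nz[OF that] by (simp add: abs_mult algebra_simps)
  qed
  have "0 < \<sigma> u * (\<gamma> u + \<epsilon> * \<delta> u)" for u
  proof (cases "u \<in> T")
    case True
    then show ?thesis using small[OF True] nz[OF True] \<sigma>[of u]
      by (auto simp: abs_if split: if_splits)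
  next
    case False
    then show ?thesis using \<delta>[OF False] \<sigma>[of u] \<open>0 < \<epsilon>\<close> by auto
  qed
  then show ?thesis by (rule that)
qed

section \<open>The stress of a positive dependence\<close>

locale positive_VV_dependence =
  fixes p :: "'a::finite \<Rightarrow> real^'d" and q :: "'b::finite \<Rightarrow> real^'d"
    and \<alpha> :: "'a \<Rightarrow> real" and \<beta> :: "'b \<Rightarrow> real"
  assumes alpha_pos: "\<And>i. 0 < \<alpha> i" and beta_pos: "\<And>j. 0 < \<beta> j"
    and VV_balance: "(\<Sum>i\<in>UNIV. \<alpha> i *\<^sub>R VV (p i)) = (\<Sum>j\<in>UNIV. \<beta> j *\<^sub>R VV (q j))"
    and hats_span: "\<And>z. (\<And>u. z \<bullet> hat (bip_config p q u) = 0) \<Longrightarrow> z = 0"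
begin

abbreviation r :: "'a + 'b \<Rightarrow> real^'d" where "r \<equiv> bip_config p q"

definition G :: "real^'d option^'d option" where
  "G = (\<Sum>i\<in>UNIV. \<alpha> i *\<^sub>R VV (p i))"

lemma G_mult_p: "G *v z = (\<Sum>i\<in>UNIV. (\<alpha> i * (hat (p i) \<bullet> z)) *\<^sub>R hat (p i))"
  by (simp add: G_def sum_scaleR_VV_mult)

lemma G_mult_q: "G *v z = (\<Sum>j\<in>UNIV. (\<beta> j * (hat (q j) \<bullet> z)) *\<^sub>R hat (q j))"
  by (simp add: G_def VV_balance sum_scaleR_VV_mult)

lemma G_inner_commute: "x \<bullet> (G *v y) = (G *v x) \<bullet> y"
  by (simp add: G_mult_p inner_sum_right inner_sum_left inner_commute mult_ac)

lemma hat_p_orthogonal_if_G_null: "z \<bullet> (G *v z) = 0 \<Longrightarrow> hat (p i) \<bullet> z = 0"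
  unfolding G_def by (rule quadratic_sum_scaleR_VV_eq_0D[where x = p]) (auto simp: alpha_pos)

lemma hat_q_orthogonal_if_G_null: "z \<bullet> (G *v z) = 0 \<Longrightarrow> hat (q j) \<bullet> z = 0"
  unfolding G_def VV_balance by (rule quadratic_sum_scaleR_VV_eq_0D[where x = q]) (auto simp: beta_pos)

lemma hats_p_span:
  assumes "\<And>i. z \<bullet> hat (p i) = 0"
  shows "z = 0"
proof (rule hats_span)
  have "z \<bullet> (G *v z) = 0" using assms by (simp add: G_def quadratic_sum_scaleR_VV inner_commute)
  then show "z \<bullet> hat (r u) = 0" for u
    using assms hat_q_orthogonal_if_G_null by (cases u) (auto simp: inner_commute)
qed

lemma hats_q_span:
  assumes "\<And>j. z \<bullet> hat (q j) = 0"
  shows "z = 0"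
proof (rule hats_span)
  have "z \<bullet> (G *v z) = 0"
    using assms by (simp add: G_def VV_balance quadratic_sum_scaleR_VV inner_commute)
  then show "z \<bullet> hat (r u) = 0" for u
    using assms hat_p_orthogonal_if_G_null by (cases u) (auto simp: inner_commute)
qed

lemma invertible_G: "invertible G"
proof -
  have "z = 0" if "G *v z = 0" for z
    using that hat_p_orthogonal_if_G_null hats_p_span by (simp add: inner_commute)
  then show ?thesis by (simp add: invertible_left_inverse matrix_left_invertible_ker)
qed

definition H :: "real^'d option^'d option" where
  "H = matrix_inv G"

lemma G_H: "G ** H = mat 1 \<and> H ** G = mat 1"
  using invertible_G unfolding H_def matrix_inv_def invertible_def by (rule someI_ex)

lemma G_H_mult [simp]: "G *v (H *v y) = y"
  and H_G_mult [simp]: "H *v (G *v y) = y"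
  by (simp_all add: matrix_vector_mul_assoc G_H)

lemma H_inner_commute: "x \<bullet> (H *v y) = (H *v x) \<bullet> y"
proof -
  have "x \<bullet> (H *v y) = (G *v (H *v x)) \<bullet> (H *v y)" by simp
  also have "\<dots> = (H *v x) \<bullet> (G *v (H *v y))" by (rule G_inner_commute[symmetric])
  also have "\<dots> = (H *v x) \<bullet> y" by simp
  finally show ?thesis .
qed

definition \<kappa> :: "'a \<Rightarrow> 'b \<Rightarrow> real" where
  "\<kappa> i j = hat (p i) \<bullet> (H *v hat (q j))"

lemma \<kappa>_swap: "hat (q j) \<bullet> (H *v hat (p i)) = \<kappa> i j"
  unfolding \<kappa>_def by (metis H_inner_commute inner_commute)

lemma hat_p_expansion: "(\<Sum>j\<in>UNIV. (\<beta> j * \<kappa> i j) *\<^sub>R hat (q j)) = hat (p i)"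
proof -
  have "hat (p i) = G *v (H *v hat (p i))" by simp
  also have "\<dots> = (\<Sum>j\<in>UNIV. (\<beta> j * \<kappa> i j) *\<^sub>R hat (q j))"
    unfolding G_mult_q \<kappa>_swap ..
  finally show ?thesis ..
qed

lemma hat_q_expansion: "(\<Sum>i\<in>UNIV. (\<alpha> i * \<kappa> i j) *\<^sub>R hat (p i)) = hat (q j)"
proof -
  have "hat (q j) = G *v (H *v hat (q j))" by simp
  also have "\<dots> = (\<Sum>i\<in>UNIV. (\<alpha> i * \<kappa> i j) *\<^sub>R hat (p i))"
    unfolding G_mult_p \<kappa>_def ..
  finally show ?thesis ..
qed

lemmas \<kappa>_row_sum = hat_combination(1)[OF hat_p_expansion]
  and \<kappa>_row_combination = hat_combination(2)[OF hat_p_expansion]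
  and \<kappa>_column_sum = hat_combination(1)[OF hat_q_expansion]
  and \<kappa>_column_combination = hat_combination(2)[OF hat_q_expansion]

definition vertex_weight :: "'a + 'b \<Rightarrow> real" where
  "vertex_weight = case_sum \<alpha> \<beta>"

definition stress :: "'a + 'b \<Rightarrow> 'a + 'b \<Rightarrow> real" where
  "stress u v = (case (u, v) of
      (Inl i, Inr j) \<Rightarrow> \<alpha> i * \<beta> j * \<kappa> i j
    | (Inr j, Inl i) \<Rightarrow> \<alpha> i * \<beta> j * \<kappa> i j
    | _ \<Rightarrow> 0)"

lemma vertex_weight_simps [simp]:
  "vertex_weight (Inl i) = \<alpha> i" "vertex_weight (Inr j) = \<beta> j"
  by (simp_all add: vertex_weight_def)

lemma vertex_weight_pos: "0 < vertex_weight u"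
  by (cases u) (simp_all add: alpha_pos beta_pos)

lemma stress_simps [simp]:
  "stress (Inl i) (Inr j) = \<alpha> i * \<beta> j * \<kappa> i j" "stress (Inr j) (Inl i) = \<alpha> i * \<beta> j * \<kappa> i j"
  "stress (Inl i) (Inl i') = 0" "stress (Inr j) (Inr j') = 0"
  by (simp_all add: stress_def)

lemma stress_commute: "stress u v = stress v u"
  by (cases u; cases v) simp_all

lemma stress_row_sum: "(\<Sum>v\<in>UNIV. stress u v) = vertex_weight u"
proof (cases u)
  case (Inl i)
  have "(\<Sum>j\<in>UNIV. \<alpha> i * \<beta> j * \<kappa> i j) = \<alpha> i * (\<Sum>j\<in>UNIV. \<beta> j * \<kappa> i j)"
    by (simp add: sum_distrib_left mult_ac)
  then show ?thesis using Inl by (simp add: sum_UNIV_sum \<kappa>_row_sum)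
next
  case (Inr j)
  have "(\<Sum>i\<in>UNIV. \<alpha> i * \<beta> j * \<kappa> i j) = \<beta> j * (\<Sum>i\<in>UNIV. \<alpha> i * \<kappa> i j)"
    by (simp add: sum_distrib_left mult_ac)
  then show ?thesis using Inr by (simp add: sum_UNIV_sum \<kappa>_column_sum)
qed

lemma equilibrium_stress: "equilibrium_stress Kbip r stress"
  unfolding equilibrium_stress_def
proof (intro conjI allI impI)
  fix u v :: "'a + 'b"
  show "stress u v = stress v u" by (rule stress_commute)
  show "\<not> Kbip u v \<Longrightarrow> stress u v = 0" by (cases u; cases v) simp_all
next
  fix v :: "'a + 'b"
  show "(\<Sum>u\<in>UNIV. stress u v *\<^sub>R (r u - r v)) = 0"
  proof (cases v)
    case (Inl i)
    have "(\<Sum>j\<in>UNIV. (\<alpha> i * \<beta> j * \<kappa> i j) *\<^sub>R (q j - p i))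
        = \<alpha> i *\<^sub>R (\<Sum>j\<in>UNIV. (\<beta> j * \<kappa> i j) *\<^sub>R q j) - (\<alpha> i * (\<Sum>j\<in>UNIV. \<beta> j * \<kappa> i j)) *\<^sub>R p i"
      by (simp add: scaleR_right_diff_distrib sum_subtractf scaleR_sum_right sum_distrib_left
          scaleR_sum_left mult_ac)
    also have "\<dots> = 0" by (simp add: \<kappa>_row_sum \<kappa>_row_combination)
    finally show ?thesis using Inl by (simp add: sum_UNIV_sum)
  next
    case (Inr j)
    have "(\<Sum>i\<in>UNIV. (\<alpha> i * \<beta> j * \<kappa> i j) *\<^sub>R (p i - q j))
        = \<beta> j *\<^sub>R (\<Sum>i\<in>UNIV. (\<alpha> i * \<kappa> i j) *\<^sub>R p i) - (\<beta> j * (\<Sum>i\<in>UNIV. \<alpha> i * \<kappa> i j)) *\<^sub>R q j"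
      by (simp add: scaleR_right_diff_distrib sum_subtractf scaleR_sum_right sum_distrib_left
          scaleR_sum_left mult_ac)
    also have "\<dots> = 0" by (simp add: \<kappa>_column_sum \<kappa>_column_combination)
    finally show ?thesis using Inr by (simp add: sum_UNIV_sum)
  qed
qed

abbreviation \<Omega> :: "real^('a + 'b)^('a + 'b)" where
  "\<Omega> \<equiv> stress_matrix stress"

lemma stress_matrix_entry: "\<Omega> $ u $ v = (if u = v then vertex_weight u else 0) - stress u v"
proof (cases "u = v")
  case True
  have "(\<Sum>w\<in>UNIV - {u}. stress u w) = vertex_weight u - stress u u"
    by (simp add: sum_diff1 stress_row_sum)
  moreover have "stress u u = 0" by (cases u) simp_all
  ultimately show ?thesis using True by (simp add: stress_matrix_def)
qed (simp add: stress_matrix_def)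

lemma stress_matrix_mult: "(\<Omega> *v x) $ u = vertex_weight u * x $ u - (\<Sum>v\<in>UNIV. stress u v * x $ v)"
  by (simp add: matrix_vector_mult_def stress_matrix_entry left_diff_distrib sum_subtractf
      if_distrib[of "\<lambda>t. t * _"] cong: if_cong)

lemma transpose_stress_matrix: "transpose \<Omega> = \<Omega>"
  by (simp add: vec_eq_iff transpose_def stress_matrix_entry stress_commute)

definition affine_fit :: "real^('a + 'b) \<Rightarrow> real^'d option" where
  "affine_fit x = H *v (\<Sum>j\<in>UNIV. (\<beta> j * x $ Inr j) *\<^sub>R hat (q j))"

lemma stress_form_sum_of_squares:
  "x \<bullet> (\<Omega> *v x) = (\<Sum>u\<in>UNIV. vertex_weight u * (x $ u - hat (r u) \<bullet> affine_fit x)\<^sup>2)"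
proof -
  define b where "b = (\<Sum>j\<in>UNIV. (\<beta> j * x $ Inr j) *\<^sub>R hat (q j))"
  define C where "C = (\<Sum>i\<in>UNIV. \<Sum>j\<in>UNIV. \<alpha> i * \<beta> j * \<kappa> i j * x $ Inl i * x $ Inr j)"
  let ?c = "\<lambda>u. hat (r u) \<bullet> affine_fit x"
  have "(\<Sum>j\<in>UNIV. \<Sum>i\<in>UNIV. \<alpha> i * \<beta> j * \<kappa> i j * x $ Inr j * x $ Inl i) = C"
    unfolding C_def by (subst sum.swap) (simp add: mult_ac)
  then have "(\<Sum>u\<in>UNIV. \<Sum>v\<in>UNIV. stress u v * x $ u * x $ v) = 2 * C"
    by (simp add: sum_UNIV_sum C_def)
  then have form: "x \<bullet> (\<Omega> *v x) = (\<Sum>u\<in>UNIV. vertex_weight u * (x $ u)\<^sup>2) - 2 * C"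
    by (simp add: inner_vec_def stress_matrix_mult right_diff_distrib sum_subtractf
        sum_distrib_left power2_eq_square mult_ac)
  have "hat (p i) \<bullet> affine_fit x = (\<Sum>j\<in>UNIV. \<beta> j * x $ Inr j * \<kappa> i j)" for i
    by (simp add: affine_fit_def linear_sum[OF matrix_vector_mul_linear] matrix_vector_mult_scaleR
        inner_sum_right \<kappa>_def)
  then have cross: "(\<Sum>u\<in>UNIV. vertex_weight u * x $ u * ?c u) = C + b \<bullet> affine_fit x"
    by (simp add: sum_UNIV_sum C_def b_def inner_sum_left sum_distrib_left mult_ac)
  have "(\<Sum>i\<in>UNIV. \<alpha> i * (hat (p i) \<bullet> affine_fit x)\<^sup>2) = affine_fit x \<bullet> (G *v affine_fit x)"
    by (simp add: G_def quadratic_sum_scaleR_VV)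
  moreover have "(\<Sum>j\<in>UNIV. \<beta> j * (hat (q j) \<bullet> affine_fit x)\<^sup>2) = affine_fit x \<bullet> (G *v affine_fit x)"
    by (simp add: G_def VV_balance quadratic_sum_scaleR_VV)
  moreover have "G *v affine_fit x = b" by (simp add: affine_fit_def b_def)
  ultimately have squares: "(\<Sum>u\<in>UNIV. vertex_weight u * (?c u)\<^sup>2) = 2 * (b \<bullet> affine_fit x)"
    by (simp add: sum_UNIV_sum inner_commute)
  have "(\<Sum>u\<in>UNIV. vertex_weight u * (x $ u - ?c u)\<^sup>2)
      = (\<Sum>u\<in>UNIV. vertex_weight u * (x $ u)\<^sup>2) - 2 * (\<Sum>u\<in>UNIV. vertex_weight u * x $ u * ?c u)
        + (\<Sum>u\<in>UNIV. vertex_weight u * (?c u)\<^sup>2)"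
    by (simp add: power2_diff algebra_simps sum.distrib sum_subtractf sum_distrib_left)
  then show ?thesis by (simp add: form cross squares)
qed

lemma psd_stress_matrix: "psd \<Omega>"
  unfolding psd_def stress_form_sum_of_squares
  by (auto intro!: sum_nonneg mult_nonneg_nonneg simp: less_imp_le[OF vertex_weight_pos])

definition affine_values :: "real^'d option \<Rightarrow> real^('a + 'b)" where
  "affine_values z = (\<chi> u. hat (r u) \<bullet> z)"

lemma stress_matrix_affine_values: "\<Omega> *v affine_values z = 0"
proof -
  have "(\<Omega> *v affine_values z) $ u = 0" for u
  proof (cases u)
    case (Inl i)
    have "(\<Sum>j\<in>UNIV. \<alpha> i * \<beta> j * \<kappa> i j * (hat (q j) \<bullet> z))
        = \<alpha> i * ((\<Sum>j\<in>UNIV. (\<beta> j * \<kappa> i j) *\<^sub>R hat (q j)) \<bullet> z)"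
      by (simp add: inner_sum_left sum_distrib_left mult_ac)
    then show ?thesis
      using Inl by (simp add: stress_matrix_mult affine_values_def sum_UNIV_sum hat_p_expansion)
  next
    case (Inr j)
    have "(\<Sum>i\<in>UNIV. \<alpha> i * \<beta> j * \<kappa> i j * (hat (p i) \<bullet> z))
        = \<beta> j * ((\<Sum>i\<in>UNIV. (\<alpha> i * \<kappa> i j) *\<^sub>R hat (p i)) \<bullet> z)"
      by (simp add: inner_sum_left sum_distrib_left mult_ac)
    then show ?thesis
      using Inr by (simp add: stress_matrix_mult affine_values_def sum_UNIV_sum hat_q_expansion)
  qed
  then show ?thesis by (simp add: vec_eq_iff)
qed

lemma stress_matrix_kernel: "{x. \<Omega> *v x = 0} = range affine_values"
proof (intro set_eqI iffI)
  fix x assume "x \<in> {x. \<Omega> *v x = 0}"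
  then have "x \<bullet> (\<Omega> *v x) = 0" by simp
  then have "(\<Sum>u\<in>UNIV. vertex_weight u * (x $ u - hat (r u) \<bullet> affine_fit x)\<^sup>2) = 0"
    by (simp only: stress_form_sum_of_squares)
  then have zero: "vertex_weight u * (x $ u - hat (r u) \<bullet> affine_fit x)\<^sup>2 = 0" for u
    by (subst (asm) sum_nonneg_eq_0_iff) (auto simp: less_imp_le[OF vertex_weight_pos])
  have "x $ u = hat (r u) \<bullet> affine_fit x" for u
    using zero[of u] vertex_weight_pos[of u] by simp
  then have "x = affine_values (affine_fit x)" by (simp add: vec_eq_iff affine_values_def)
  then show "x \<in> range affine_values" by blast
qed (auto simp: stress_matrix_affine_values)

lemma dim_stress_matrix_kernel: "dim {x. \<Omega> *v x = 0} = CARD('d) + 1"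
proof -
  have "linear affine_values"
    by (rule linearI) (simp_all add: affine_values_def vec_eq_iff inner_add_right)
  moreover have "inj affine_values"
  proof (rule injI)
    fix z z' assume "affine_values z = affine_values z'"
    then have "(z - z') \<bullet> hat (r u) = 0" for u
      by (simp add: affine_values_def vec_eq_iff inner_diff_left inner_commute)
    then show "z = z'" using hats_span[of "z - z'"] by simp
  qed
  ultimately have "dim (range affine_values) = dim (UNIV :: (real^'d option) set)"
    by (intro dim_image_eq) (auto intro: inj_on_subset)
  then show ?thesis by (simp add: stress_matrix_kernel dim_UNIV)
qed

lemma rank_stress_matrix: "rank \<Omega> = CARD('a + 'b) - CARD('d) - 1"
  using rank_add_dim_kernel_symmetric[OF transpose_stress_matrix] dim_stress_matrix_kernel
  by simp

lemma not_on_conic_at_infinity: "\<not> on_conic_at_infinity (bar_vectors Kbip r)"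
proof
  assume "on_conic_at_infinity (bar_vectors Kbip r)"
  then obtain Q :: "real^'d^'d" where "Q \<noteq> 0" and Q_sym: "transpose Q = Q"
    and Q_bars: "\<And>v. v \<in> bar_vectors Kbip r \<Longrightarrow> v \<bullet> (Q *v v) = 0"
    unfolding on_conic_at_infinity_def by blast
  have bars: "p i \<bullet> (Q *v p i) - 2 * (p i \<bullet> (Q *v q j)) + q j \<bullet> (Q *v q j) = 0" for i j
  proof -
    have "p i - q j \<in> bar_vectors Kbip r"
      unfolding bar_vectors_def by (rule CollectI, rule exI[of _ "Inl i"], rule exI[of _ "Inr j"]) simp
    then have "(p i - q j) \<bullet> (Q *v (p i - q j)) = 0" by (rule Q_bars)
    moreover have "q j \<bullet> (Q *v p i) = p i \<bullet> (Q *v q j)"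
      using inner_matrix_vector_mult_symmetric[OF Q_sym, of "q j" "p i"]
      by (simp only: inner_commute[of "Q *v q j"])
    ultimately show ?thesis
      by (simp add: matrix_vector_mult_diff_distrib inner_diff_left inner_diff_right)
  qed
  have Q_diff: "Q *v (q j' - q j) = 0" for j j'
  proof -
    \<comment> \<open>Subtracting the bar conditions for q j and q j' leaves an affine function of p i.\<close>
    let ?c = "(q j \<bullet> (Q *v q j) - q j' \<bullet> (Q *v q j')) / 2"
    have "affine_form ?c (Q *v (q j' - q j)) \<bullet> hat (p i) = 0" for i
      using bars[of i j] bars[of i j'] inner_commute[of "Q *v q j'" "p i"] inner_commute[of "Q *v q j" "p i"]
      by (simp add: inner_affine_form_hat matrix_vector_mult_diff_distrib inner_diff_left field_simps)
    then have "affine_form ?c (Q *v (q j' - q j)) = 0" by (rule hats_p_span)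
    then show ?thesis by (rule affine_form_eq_0D)
  qed
  fix j0 :: 'b
  have "Q $ k = 0" for k
  proof -
    have "Q $ k \<bullet> (q j - q j0) = 0" for j
      using arg_cong[OF Q_diff[of j j0], of "\<lambda>v. v $ k"] by (simp add: matrix_vector_mul_component)
    then have "affine_form (- (Q $ k \<bullet> q j0)) (Q $ k) \<bullet> hat (q j) = 0" for j
      by (simp add: inner_affine_form_hat inner_diff_right)
    then have "affine_form (- (Q $ k \<bullet> q j0)) (Q $ k) = 0" by (rule hats_q_span)
    then show ?thesis by (rule affine_form_eq_0D)
  qed
  then have "Q = 0" by (simp add: vec_eq_iff)
  with \<open>Q \<noteq> 0\<close> show False by contradiction
qed

lemma affine_hull_r: "affine hull (range r) = UNIV"
  by (rule affine_hull_eq_UNIV_if_hats_span) (rule hats_span)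

lemma super_stable: "super_stable Kbip r"
  unfolding super_stable_def
  using affine_hull_r equilibrium_stress psd_stress_matrix
    rank_stress_matrix not_on_conic_at_infinity
  by (intro conjI exI[of _ stress])

lemma affine_hull_p: "affine hull (range p) = UNIV"
  by (rule affine_hull_eq_UNIV_if_hats_span) (rule hats_p_span)

lemma affine_hull_q: "affine hull (range q) = UNIV"
  by (rule affine_hull_eq_UNIV_if_hats_span) (rule hats_q_span)

end

lemma positive_VV_dependence_if_signed_dependence:
  fixes p :: "'a::finite \<Rightarrow> real^'d" and q :: "'b::finite \<Rightarrow> real^'d"
    and \<gamma> :: "'a + 'b \<Rightarrow> real"
  assumes qgp: "quadric_general_position (bip_config p q) (I <+> J)"
    and supp: "{u. \<gamma> u \<noteq> 0} \<subseteq> I <+> J" and card_supp: "dimM CARD('d) \<le> card {u. \<gamma> u \<noteq> 0}"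
    and sign_p: "\<And>i. 0 \<le> \<gamma> (Inl i)" and sign_q: "\<And>j. \<gamma> (Inr j) \<le> 0"
    and dep: "(\<Sum>u\<in>UNIV. \<gamma> u *\<^sub>R VV (bip_config p q u)) = 0"
  obtains \<alpha> \<beta> where "positive_VV_dependence p q \<alpha> \<beta>"
proof -
  let ?r = "bip_config p q"
  obtain T where T_supp: "T \<subseteq> {u. \<gamma> u \<noteq> 0}" and card_T: "card T = dimM CARD('d)"
    using obtain_subset_with_card_n[OF card_supp] by metis
  then have T: "T \<subseteq> I <+> J" using supp by blast
  \<comment> \<open>Outside T the dependence \<delta> has the strict signs wanted for \<alpha> and -\<beta>; on T,
    where \<gamma> is nonzero, a small multiple of \<delta> cannot change the sign of \<gamma>.\<close>
  define \<sigma> :: "'a + 'b \<Rightarrow> real" where "\<sigma> = case_sum (\<lambda>_. 1) (\<lambda>_. -1)"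
  obtain \<delta> where \<delta>: "\<And>u. u \<notin> T \<Longrightarrow> \<delta> u = \<sigma> u"
    and dep_\<delta>: "(\<Sum>u\<in>UNIV. \<delta> u *\<^sub>R VV (?r u)) = 0"
    using quadric_general_position_dependence_prescribed_outside[OF qgp T card_T] by blast
  obtain \<epsilon> where pos: "\<And>u. 0 < \<sigma> u * (\<gamma> u + \<epsilon> * \<delta> u)"
  proof (rule exists_sign_preserving_perturbation[of T \<gamma> \<sigma> \<delta>])
    show "\<And>u. u \<in> T \<Longrightarrow> \<gamma> u \<noteq> 0" using T_supp by auto
    show "\<sigma> u = 1 \<or> \<sigma> u = -1" "0 \<le> \<sigma> u * \<gamma> u" for u
      using sign_p sign_q by (cases u; simp add: \<sigma>_def)+
  qed (use \<delta> in auto)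
  define \<alpha> where "\<alpha> i = \<gamma> (Inl i) + \<epsilon> * \<delta> (Inl i)" for i
  define \<beta> where "\<beta> j = - (\<gamma> (Inr j) + \<epsilon> * \<delta> (Inr j))" for j
  have "(\<Sum>u\<in>UNIV. (\<epsilon> * \<delta> u) *\<^sub>R VV (?r u)) = \<epsilon> *\<^sub>R (\<Sum>u\<in>UNIV. \<delta> u *\<^sub>R VV (?r u))"
    by (simp add: scaleR_sum_right)
  then have "(\<Sum>u\<in>UNIV. (\<gamma> u + \<epsilon> * \<delta> u) *\<^sub>R VV (?r u)) = 0"
    using dep dep_\<delta> by (simp add: scaleR_add_left sum.distrib)
  moreover have "(\<Sum>j\<in>UNIV. \<beta> j *\<^sub>R VV (q j))
      = - (\<Sum>j\<in>UNIV. (\<gamma> (Inr j) + \<epsilon> * \<delta> (Inr j)) *\<^sub>R VV (q j))"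
    unfolding \<beta>_def scaleR_minus_left sum_negf ..
  ultimately have "(\<Sum>i\<in>UNIV. \<alpha> i *\<^sub>R VV (p i)) = (\<Sum>j\<in>UNIV. \<beta> j *\<^sub>R VV (q j))"
    by (simp add: sum_UNIV_sum \<alpha>_def add_eq_0_iff2)
  moreover have "0 < \<alpha> i" "0 < \<beta> j" for i j
    using pos[of "Inl i"] pos[of "Inr j"] by (simp_all add: \<alpha>_def \<beta>_def \<sigma>_def)
  moreover have "z = 0" if "\<And>u. z \<bullet> hat (?r u) = 0" for z
    using that by (intro quadric_general_position_hats_span[OF qgp T finite card_T])
  ultimately have "positive_VV_dependence p q \<alpha> \<beta>"
    by unfold_locales auto
  then show ?thesis by (rule that)
qed

lemma exists_positive_VV_dependence:
  fixes p :: "'a::finite \<Rightarrow> real^'d" and q :: "'b::finite \<Rightarrow> real^'d"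
  assumes qgp: "quadric_general_position (bip_config p q) (I <+> J)"
    and not_sep: "\<not> strictly_separated_by_quadric (p ` I) (q ` J)"
  obtains \<alpha> \<beta> where "positive_VV_dependence p q \<alpha> \<beta>"
    and "dimM CARD('d) < CARD('a) + CARD('b)"
proof -
  obtain \<gamma> :: "'a + 'b \<Rightarrow> real" where supp: "\<And>u. \<gamma> u \<noteq> 0 \<Longrightarrow> u \<in> I <+> J"
    and sign_p: "\<And>i. 0 \<le> \<gamma> (Inl i)" and sign_q: "\<And>j. \<gamma> (Inr j) \<le> 0"
    and sum_0: "sum \<gamma> UNIV = 0" and dep: "(\<Sum>u\<in>UNIV. \<gamma> u *\<^sub>R VV (bip_config p q u)) = 0"
    and nz: "\<exists>u. \<gamma> u \<noteq> 0"
    using signed_VV_dependence[OF qgp not_sep] by blast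
  define S where "S = {u. \<gamma> u \<noteq> 0}"
  have S: "S \<subseteq> I <+> J" using supp by (auto simp: S_def)
  have "sum \<gamma> UNIV = sum \<gamma> S"
    and "(\<Sum>u\<in>UNIV. \<gamma> u *\<^sub>R VV (bip_config p q u)) = (\<Sum>u\<in>S. \<gamma> u *\<^sub>R VV (bip_config p q u))"
    by (auto simp: S_def intro: sum.mono_neutral_right)
  then have card_S: "dimM CARD('d) < card S"
    using sum_0 dep nz by (intro quadric_general_position_dependence_card[OF qgp S]) (auto simp: S_def)
  moreover have "card S \<le> CARD('a) + CARD('b)"
    using card_mono[of UNIV S] by simp
  ultimately have "dimM CARD('d) < CARD('a) + CARD('b)" by linarith
  moreover obtain \<alpha> \<beta> where "positive_VV_dependence p q \<alpha> \<beta>"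
    using positive_VV_dependence_if_signed_dependence[OF qgp _ _ sign_p sign_q dep] S card_S
    unfolding S_def by (metis less_imp_le)
  ultimately show ?thesis using that by blast
qed

theorem mainTheorem6:
  fixes p :: "'a::finite \<Rightarrow> real^'d" and q :: "'b::finite \<Rightarrow> real^'d"
    and I :: "'a set" and J :: "'b set"
  assumes "quadric_general_position (bip_config p q) (I <+> J)"
    and "\<not> strictly_separated_by_quadric (p ` I) (q ` J)"
  shows "super_stable Kbip (bip_config p q)
         \<and> CARD('a) + CARD('b) \<ge> dimM CARD('d) + 1
         \<and> affine hull (range p) = affine hull (range q)
         \<and> affine hull (range q) = UNIV"
proof -
  obtain \<alpha> \<beta> where "positive_VV_dependence p q \<alpha> \<beta>"
    and "dimM CARD('d) < CARD('a) + CARD('b)"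
    using exists_positive_VV_dependence[OF assms] by blast
  then interpret positive_VV_dependence p q \<alpha> \<beta> by simp
  show ?thesis
    using super_stable affine_hull_p affine_hull_q \<open>dimM CARD('d) < _\<close> by simp
qed

end
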